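(* Let a symmetric instance with $n$ actions and $k$ signals ($2\le k\le n$) be given, and let its truncated instance be obtained by removing actions $k+1,\dots,n$ and restricting every state $\boldsymbol\theta$ to $(\theta_1,\dots,\theta_k)$ (with the induced marginal distribution), keeping $k$ signals. Then there exists a direct scheme recommending actions in $[k]$ whose signal distribution depends only on $(\theta_1,\dots,\theta_k)$ that is both an optimal persuasive scheme with $k$ signals for the original instance and an optimal persuasive scheme with $k$ signals for the truncated instance; in particular the optimal sender utilities with $k$ signals of the two instances coincide.
   Context: Model: receiver chooses one of the actions; each action has a type; the state $\boldsymbol\theta$ is drawn from a known distribution $q$; each type $t$ has receiver value $\rho(t)$ and sender value $\xi(t)$. A scheme with $k$ signals maps states to distributions over $k$ signals; the receiver best-responds to her posterior with ties broken in favor of the sender; optimal means maximal sender expected utility among schemes with $k$ signals. Direct: each signal recommends an action; persuasive: for each signal sent with positive probability recommending $i$, the receiver's conditional expected value of $i$ is at least that of every available action. Symmetric instance: $q_{\boldsymbol\theta}=q_{\boldsymbol\theta'}$ whenever $\boldsymbol\theta'$ is a permutation of $\boldsymbol\theta$. *)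

theory Defs
  imports "HOL-Probability.Probability"
begin

text \<open>
A state of an instance with n actions is a
list theta of length n, where theta ! i is the type of action i (actions are
indexed 0..n-1, i.e. action i+1 of the paper is index i). All conditional expectations are written
unnormalised (multiplied by the probability of the signal), which does not change
best responses for signals of positive probability; signals of probability zero
contribute nothing to the sender utility.
\<close>

definition is_scheme :: "nat \<Rightarrow> 'a list pmf \<Rightarrow> ('a list \<Rightarrow> nat pmf) \<Rightarrow> bool" where
  "is_scheme k q phi \<longleftrightarrow> (\<forall>\<theta>\<in>set_pmf q. set_pmf (phi \<theta>) \<subseteq> {..<k})"

definition sig_prob :: "'a list pmf \<Rightarrow> ('a list \<Rightarrow> nat pmf) \<Rightarrow> nat \<Rightarrow> real" where
  "sig_prob q phi s = (\<Sum>\<theta>\<in>set_pmf q. pmf q \<theta> * pmf (phi \<theta>) s)"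

definition cond_val :: "('a \<Rightarrow> real) \<Rightarrow> 'a list pmf \<Rightarrow> ('a list \<Rightarrow> nat pmf) \<Rightarrow> nat \<Rightarrow> nat \<Rightarrow> real" where
  "cond_val v q phi s i = (\<Sum>\<theta>\<in>set_pmf q. pmf q \<theta> * pmf (phi \<theta>) s * v (\<theta> ! i))"

definition best_resp :: "nat \<Rightarrow> ('a \<Rightarrow> real) \<Rightarrow> 'a list pmf \<Rightarrow> ('a list \<Rightarrow> nat pmf) \<Rightarrow> nat \<Rightarrow> nat set" where
  "best_resp n \<rho> q phi s =
     {i. i < n \<and> (\<forall>j<n. cond_val \<rho> q phi s j \<le> cond_val \<rho> q phi s i)}"

definition sender_util ::
  "nat \<Rightarrow> nat \<Rightarrow> 'a list pmf \<Rightarrow> ('a \<Rightarrow> real) \<Rightarrow> ('a \<Rightarrow> real) \<Rightarrow> ('a list \<Rightarrow> nat pmf) \<Rightarrow> real" where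
  "sender_util n k q \<rho> \<xi> phi =
     (\<Sum>s<k. Max (cond_val \<xi> q phi s ` best_resp n \<rho> q phi s))"

definition opt_util :: "nat \<Rightarrow> nat \<Rightarrow> 'a list pmf \<Rightarrow> ('a \<Rightarrow> real) \<Rightarrow> ('a \<Rightarrow> real) \<Rightarrow> real" where
  "opt_util n k q \<rho> \<xi> = (SUP phi \<in> {phi. is_scheme k q phi}. sender_util n k q \<rho> \<xi> phi)"

text \<open>direct scheme with k signals: signal s recommends action s (s < k).
  Persuasive: for each signal sent with positive probability, the recommended action
  is a best response among all n actions.\<close>
definition persuasive_direct :: "nat \<Rightarrow> nat \<Rightarrow> 'a list pmf \<Rightarrow> ('a \<Rightarrow> real) \<Rightarrow> ('a list \<Rightarrow> nat pmf) \<Rightarrow> bool" where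
  "persuasive_direct n k q \<rho> phi \<longleftrightarrow> is_scheme k q phi \<and>
     (\<forall>s<k. sig_prob q phi s > 0 \<longrightarrow> (\<forall>j<n. cond_val \<rho> q phi s j \<le> cond_val \<rho> q phi s s))"

definition direct_util :: "nat \<Rightarrow> 'a list pmf \<Rightarrow> ('a \<Rightarrow> real) \<Rightarrow> ('a list \<Rightarrow> nat pmf) \<Rightarrow> real" where
  "direct_util k q \<xi> phi = (\<Sum>s<k. cond_val \<xi> q phi s s)"

definition symmetric_instance :: "'a list pmf \<Rightarrow> bool" where
  "symmetric_instance q \<longleftrightarrow> (\<forall>\<theta> \<theta>'. mset \<theta>' = mset \<theta> \<longrightarrow> pmf q \<theta>' = pmf q \<theta>)"

end

theory Submission
  imports Defs "HOL-Combinatorics.Permutations"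
begin

text \<open>
  Relax schemes to signal weights \<open>w \<theta> s\<close> that are merely stochastic on the support; this
  set is compact and closed under averaging. Any scheme, for \<open>n\<close> or for \<open>k\<close> actions, is matched
  by weights of the same value in which signal \<open>s < k\<close> obediently recommends action \<open>s\<close>: permute
  the actions so that the best responses land in \<open>[k]\<close>, which the symmetric prior does not see.
  Take a maximiser of the value, average it over the fibres of \<open>\<theta> \<mapsto> take k \<theta>\<close>, and then over
  the cyclic shifts of the first \<open>k\<close> coordinates. Both averages keep the value and obedience
  within \<open>[k]\<close>, the second makes the weights obedient against the actions outside \<open>[k]\<close> too,
  and the result only depends on \<open>take k \<theta>\<close>, so it is one direct scheme optimal for both instances.
\<close>

lemma pmf_exists_of_weights:
  fixes f :: "nat \<Rightarrow> real"
  assumes "\<And>s. s < k \<Longrightarrow> 0 \<le> f s" and "(\<Sum>s<k. f s) = 1"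
  shows "\<exists>p. \<forall>s. pmf p s = (if s < k then f s else 0)"
proof -
  define g where "g s = (if s < k then f s else 0)" for s
  have g_nonneg: "\<And>s. 0 \<le> g s" using assms by (simp add: g_def)
  have "(\<integral>\<^sup>+x. ennreal (g x) \<partial>count_space UNIV) = (\<Sum>x\<in>{..<k}. ennreal (g x))"
    by (rule nn_integral_count_space') (auto simp: g_def)
  also have "\<dots> = ennreal (\<Sum>x<k. g x)" using g_nonneg by (simp add: sum_ennreal)
  also have "\<dots> = 1" using assms by (simp add: g_def)
  finally have "(\<integral>\<^sup>+x. ennreal (g x) \<partial>count_space UNIV) = 1" .
  then show ?thesis
    by (intro exI[of _ "embed_pmf g"]) (simp add: pmf_embed_pmf[OF g_nonneg] g_def)
qed

lemma sum_set_pmf_map_pmf: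
  fixes F :: "'b \<Rightarrow> real"
  assumes "finite (set_pmf q)"
  shows "(\<Sum>t\<in>set_pmf (map_pmf g q). pmf (map_pmf g q) t * F t) = (\<Sum>\<theta>\<in>set_pmf q. pmf q \<theta> * F (g \<theta>))"
proof -
  have "(LINT x|map_pmf g q. F x) = (\<Sum>t\<in>set_pmf (map_pmf g q). pmf (map_pmf g q) t *\<^sub>R F t)"
    by (rule integral_measure_pmf) (auto simp: assms)
  moreover have "(LINT x|q. F (g x)) = (\<Sum>t\<in>set_pmf q. pmf q t *\<^sub>R F (g t))"
    by (rule integral_measure_pmf) (auto simp: assms)
  ultimately show ?thesis by simp
qed

lemma bij_betw_add_mod_lessThan:
  assumes "0 < (k::nat)"
  shows "bij_betw (\<lambda>x. (x + c) mod k) {..<k} {..<k}"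
proof -
  have "x = y" if "x < k" "y \<le> x" "(x + c) mod k = (y + c) mod k" for x y
  proof -
    have "k dvd x - y" using that mod_eq_dvd_iff_nat[of "y + c" "x + c" k] by simp
    moreover have "x - y < k" using that by simp
    ultimately show "x = y" using that(2) by (metis dvd_imp_le le_antisym not_less zero_less_diff)
  qed
  then have inj: "inj_on (\<lambda>x. (x + c) mod k) {..<k}"
    by (intro inj_onI) (metis lessThan_iff nat_le_linear)
  moreover have "(\<lambda>x. (x + c) mod k) ` {..<k} \<subseteq> {..<k}" using assms by auto
  ultimately have "(\<lambda>x. (x + c) mod k) ` {..<k} = {..<k}" by (intro endo_inj_surj) auto
  with inj show ?thesis by (simp add: bij_betw_def)
qed

lemma permutes_exists_image_subset_lessThan:
  assumes "A \<subseteq> {..<n}" and "card A \<le> k" and "k \<le> (n::nat)"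
  shows "\<exists>p. p permutes {..<n} \<and> p ` A \<subseteq> {..<k}"
proof -
  have fin_A: "finite A" using assms(1) finite_subset by blast
  define B where "B = {..<card A}"
  define A' where "A' = {..<n} - A"
  define B' where "B' = {..<n} - B"
  have "finite B" "card A = card B" by (simp_all add: B_def)
  then obtain f where f: "bij_betw f A B" using finite_same_card_bij[OF fin_A] by blast
  have B_sub: "B \<subseteq> {..<n}" using assms card_mono[OF _ assms(1)] by (auto simp: B_def)
  have "card A' = card B'" unfolding A'_def B'_def using assms(1) B_sub fin_A
    by (simp add: card_Diff_subset B_def)
  moreover have "finite A'" "finite B'" by (simp_all add: A'_def B'_def)
  ultimately obtain f' where f': "bij_betw f' A' B'" using finite_same_card_bij[of A' B'] by blast
  define p where "p x = (if x \<in> A then f x else if x < n then f' x else x)" for x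
  have p_A: "bij_betw p A B" using f by (rule bij_betw_cong[THEN iffD1, rotated]) (simp add: p_def)
  moreover have "bij_betw p A' B'"
    using f' by (rule bij_betw_cong[THEN iffD1, rotated]) (auto simp: p_def A'_def)
  ultimately have "bij_betw p (A \<union> A') (B \<union> B')" by (rule bij_betw_combine) (auto simp: B'_def)
  moreover have "A \<union> A' = {..<n}" "B \<union> B' = {..<n}" using assms(1) B_sub by (auto simp: A'_def B'_def)
  ultimately have "bij_betw p {..<n} {..<n}" by simp
  then have "p permutes {..<n}"
    by (rule bij_imp_permutes) (use assms(1) in \<open>auto simp: p_def\<close>)
  moreover have "p ` A \<subseteq> {..<k}" using bij_betw_imp_surj_on[OF p_A] assms by (auto simp: B_def)
  ultimately show ?thesis by blast
qed

lemma take_permute_list: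
  assumes "g permutes {..<k}" and "k \<le> length xs"
  shows "take k (permute_list g xs) = permute_list g (take k xs)"
proof (rule nth_equalityI)
  fix i assume "i < length (take k (permute_list g xs))"
  then have i: "i < k" using assms(2) by simp
  have "g permutes {..<length xs}" using assms(1) by (rule permutes_subset) (use assms(2) in auto)
  moreover have "g permutes {..<length (take k xs)}" using assms by simp
  moreover have "g i < k" using permutes_in_image[OF assms(1)] i by simp
  ultimately show "take k (permute_list g xs) ! i = permute_list g (take k xs) ! i"
    using i assms(2) by (simp add: permute_list_nth)
qed (use assms in simp)

lemma compact_PiE_UNIV:
  fixes X :: "'i \<Rightarrow> ('b::topological_space) set"
  assumes "\<And>i. compact (X i)"
  shows "compact (PiE UNIV X)"
proof -
  have "compactin (product_topology (\<lambda>i. euclidean) UNIV) (PiE UNIV X)"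
    using assms by (simp add: compactin_PiE)
  then show ?thesis by (simp add: euclidean_product_topology)
qed

lemma continuous_on_apply2:
  "continuous_on UNIV (\<lambda>w::'a \<Rightarrow> 'b \<Rightarrow> 'c::topological_space. w x y)"
  by (rule continuous_on_product_then_coordinatewise[OF continuous_on_product_coordinates])

lemma best_resp_attains_Max:
  assumes "0 < m"
  shows "\<exists>a \<in> best_resp m \<rho> q phi s.
           cond_val \<xi> q phi s a = Max (cond_val \<xi> q phi s ` best_resp m \<rho> q phi s)"
proof -
  let ?f = "cond_val \<rho> q phi s"
  have "Max (?f ` {..<m}) \<in> ?f ` {..<m}" using assms by (intro Max_in) auto
  then obtain i where "i < m" "?f i = Max (?f ` {..<m})" by auto
  then have "i \<in> best_resp m \<rho> q phi s" unfolding best_resp_def by auto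
  moreover have "finite (best_resp m \<rho> q phi s)" unfolding best_resp_def by auto
  ultimately have "Max (cond_val \<xi> q phi s ` best_resp m \<rho> q phi s)
                     \<in> cond_val \<xi> q phi s ` best_resp m \<rho> q phi s"
    by (intro Max_in) auto
  then show ?thesis by auto
qed

lemma direct_util_le_sender_util:
  assumes "k \<le> m" and "\<And>s j. s < k \<Longrightarrow> j < m \<Longrightarrow> cond_val \<rho> q phi s j \<le> cond_val \<rho> q phi s s"
  shows "direct_util k q \<xi> phi \<le> sender_util m k q \<rho> \<xi> phi"
  unfolding direct_util_def sender_util_def
proof (intro sum_mono)
  fix s assume "s \<in> {..<k}"
  then have "s \<in> best_resp m \<rho> q phi s" unfolding best_resp_def using assms by auto
  moreover have "finite (best_resp m \<rho> q phi s)" unfolding best_resp_def by auto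
  ultimately show "cond_val \<xi> q phi s s \<le> Max (cond_val \<xi> q phi s ` best_resp m \<rho> q phi s)"
    by (intro Max_ge) auto
qed

lemma opt_util_eqI:
  assumes "is_scheme k q phi"
    and "\<And>phi'. is_scheme k q phi' \<Longrightarrow> sender_util n k q \<rho> \<xi> phi' \<le> sender_util n k q \<rho> \<xi> phi"
  shows "opt_util n k q \<rho> \<xi> = sender_util n k q \<rho> \<xi> phi"
  unfolding opt_util_def by (rule cSup_eq_maximum) (use assms in auto)

lemma persuasive_direct_mono:
  "m' \<le> m \<Longrightarrow> persuasive_direct m k q \<rho> phi \<Longrightarrow> persuasive_direct m' k q \<rho> phi"
  unfolding persuasive_direct_def by auto

lemma is_scheme_map_pmf_iff:
  "is_scheme k (map_pmf g q) \<psi> \<longleftrightarrow> is_scheme k q (\<lambda>\<theta>. \<psi> (g \<theta>))"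
  unfolding is_scheme_def by auto

lemma sig_prob_map_pmf:
  "finite (set_pmf q) \<Longrightarrow> sig_prob (map_pmf g q) \<psi> s = sig_prob q (\<lambda>\<theta>. \<psi> (g \<theta>)) s"
  unfolding sig_prob_def by (rule sum_set_pmf_map_pmf)

lemma cond_val_map_pmf_take:
  assumes "finite (set_pmf q)" and "i < k"
  shows "cond_val v (map_pmf (take k) q) \<psi> s i = cond_val v q (\<lambda>\<theta>. \<psi> (take k \<theta>)) s i"
proof -
  have "cond_val v (map_pmf (take k) q) \<psi> s i
          = (\<Sum>\<theta>\<in>set_pmf q. pmf q \<theta> * (pmf (\<psi> (take k \<theta>)) s * v (take k \<theta> ! i)))"
    unfolding cond_val_def using sum_set_pmf_map_pmf[OF assms(1)] by (simp add: mult.assoc)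
  then show ?thesis unfolding cond_val_def using assms(2) by (simp add: mult.assoc)
qed

lemma sender_util_map_pmf_take:
  assumes "finite (set_pmf q)"
  shows "sender_util k k (map_pmf (take k) q) \<rho> \<xi> \<psi> = sender_util k k q \<rho> \<xi> (\<lambda>\<theta>. \<psi> (take k \<theta>))"
proof -
  have "best_resp k \<rho> (map_pmf (take k) q) \<psi> s = best_resp k \<rho> q (\<lambda>\<theta>. \<psi> (take k \<theta>)) s" for s
    unfolding best_resp_def by (auto simp: cond_val_map_pmf_take[OF assms])
  then show ?thesis unfolding sender_util_def
    by (intro sum.cong refl arg_cong[where f = Max] image_cong)
      (auto simp: best_resp_def cond_val_map_pmf_take[OF assms])
qed

lemma direct_util_map_pmf_take:
  "finite (set_pmf q) \<Longrightarrow>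
     direct_util k (map_pmf (take k) q) \<xi> \<psi> = direct_util k q \<xi> (\<lambda>\<theta>. \<psi> (take k \<theta>))"
  unfolding direct_util_def by (simp add: cond_val_map_pmf_take)

lemma persuasive_direct_map_pmf_take_iff:
  "finite (set_pmf q) \<Longrightarrow>
     persuasive_direct k k (map_pmf (take k) q) \<rho> \<psi> \<longleftrightarrow>
     persuasive_direct k k q \<rho> (\<lambda>\<theta>. \<psi> (take k \<theta>))"
  unfolding persuasive_direct_def
  by (simp add: is_scheme_map_pmf_iff sig_prob_map_pmf cond_val_map_pmf_take)

locale symmetric_prior =
  fixes n k :: nat and q :: "'a list pmf" and \<rho> \<xi> :: "'a \<Rightarrow> real"
  assumes k_pos: "0 < k" and k_le_n: "k \<le> n"
    and finite_support: "finite (set_pmf q)"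
    and length_support: "\<forall>\<theta>\<in>set_pmf q. length \<theta> = n"
    and symmetric: "symmetric_instance q"
begin

abbreviation "S \<equiv> set_pmf q"

definition expect :: "('a list \<Rightarrow> real) \<Rightarrow> real" where
  "expect f = (\<Sum>\<theta>\<in>S. pmf q \<theta> * f \<theta>)"

definition wcond_val :: "('a list \<Rightarrow> nat \<Rightarrow> real) \<Rightarrow> ('a \<Rightarrow> real) \<Rightarrow> nat \<Rightarrow> nat \<Rightarrow> real" where
  "wcond_val w v s i = expect (\<lambda>\<theta>. w \<theta> s * v (\<theta> ! i))"

definition stochastic :: "('a list \<Rightarrow> nat \<Rightarrow> real) \<Rightarrow> bool" where
  "stochastic w \<longleftrightarrow> (\<forall>\<theta>\<in>S. (\<forall>s<k. 0 \<le> w \<theta> s) \<and> (\<Sum>s<k. w \<theta> s) = 1)"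

definition obedient :: "nat \<Rightarrow> ('a list \<Rightarrow> nat \<Rightarrow> real) \<Rightarrow> bool" where
  "obedient m w \<longleftrightarrow> stochastic w \<and> (\<forall>s<k. \<forall>j<m. wcond_val w \<rho> s j \<le> wcond_val w \<rho> s s)"

definition wutil :: "('a list \<Rightarrow> nat \<Rightarrow> real) \<Rightarrow> real" where
  "wutil w = (\<Sum>s<k. wcond_val w \<xi> s s)"

lemma cond_val_eq_wcond_val: "cond_val v q phi s i = wcond_val (\<lambda>\<theta> s. pmf (phi \<theta>) s) v s i"
  by (simp add: cond_val_def wcond_val_def expect_def mult.assoc)

lemma expect_sum: "expect (\<lambda>\<theta>. \<Sum>x\<in>A. f x \<theta>) = (\<Sum>x\<in>A. expect (f x))"
  by (simp add: expect_def sum_distrib_left sum.swap[of _ A])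

lemma expect_cmult: "expect (\<lambda>\<theta>. c * f \<theta>) = c * expect f"
  by (simp add: expect_def sum_distrib_left mult_ac)

lemma expect_divide: "expect (\<lambda>\<theta>. f \<theta> / c) = expect f / c"
  by (simp add: expect_def sum_divide_distrib)

lemma expect_cong: "(\<And>\<theta>. \<theta> \<in> S \<Longrightarrow> f \<theta> = g \<theta>) \<Longrightarrow> expect f = expect g"
  by (simp add: expect_def)

lemma sum_wcond_val_signals:
  assumes "stochastic w"
  shows "(\<Sum>r<k. wcond_val w v r j) = expect (\<lambda>\<theta>. v (\<theta> ! j))"
proof -
  have "(\<Sum>r<k. wcond_val w v r j) = expect (\<lambda>\<theta>. (\<Sum>r<k. w \<theta> r) * v (\<theta> ! j))"
    unfolding wcond_val_def by (simp add: expect_sum sum_distrib_right)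
  also have "\<dots> = expect (\<lambda>\<theta>. v (\<theta> ! j))"
    using assms by (intro expect_cong) (simp add: stochastic_def)
  finally show ?thesis .
qed

subsection \<open>Symmetry of the prior\<close>

lemma permute_list_support:
  assumes "g permutes {..<n}" and "\<theta> \<in> S"
  shows "permute_list g \<theta> \<in> S" and "pmf q (permute_list g \<theta>) = pmf q \<theta>"
proof -
  have "mset (permute_list g \<theta>) = mset \<theta>" using assms length_support by simp
  then show eq: "pmf q (permute_list g \<theta>) = pmf q \<theta>"
    using symmetric unfolding symmetric_instance_def by blast
  show "permute_list g \<theta> \<in> S" using eq assms(2) by (simp add: set_pmf_eq)
qed

lemma permute_list_inv_cancel:
  assumes "g permutes {..<n}" and "\<theta> \<in> S"
  shows "permute_list (inv g) (permute_list g \<theta>) = \<theta>"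
    and "permute_list g (permute_list (inv g) \<theta>) = \<theta>"
proof -
  have len: "length \<theta> = n" using length_support assms by auto
  have "permute_list (inv g) (permute_list g \<theta>) = permute_list (g \<circ> inv g) \<theta>"
    using permute_list_compose[of "inv g" \<theta> g] permutes_inv[OF assms(1)] len by simp
  then show "permute_list (inv g) (permute_list g \<theta>) = \<theta>"
    using permutes_inv_o(1)[OF assms(1)] by simp
  have "permute_list g (permute_list (inv g) \<theta>) = permute_list (inv g \<circ> g) \<theta>"
    using permute_list_compose[of g \<theta> "inv g"] assms(1) len by simp
  then show "permute_list g (permute_list (inv g) \<theta>) = \<theta>"
    using permutes_inv_o(2)[OF assms(1)] by simp
qed

lemma expect_permute_list:
  assumes "g permutes {..<n}"
  shows "expect (\<lambda>\<theta>. F (permute_list g \<theta>)) = expect F"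
proof -
  have "bij_betw (permute_list g) S S"
    by (rule bij_betwI[where g = "permute_list (inv g)"])
      (auto simp: permute_list_support[OF assms] permute_list_support[OF permutes_inv[OF assms]]
                  permute_list_inv_cancel[OF assms])
  then have "(\<Sum>\<theta>\<in>S. pmf q (permute_list g \<theta>) * F (permute_list g \<theta>)) = expect F"
    unfolding expect_def by (rule sum.reindex_bij_betw)
  then show ?thesis
    unfolding expect_def using permute_list_support(2)[OF assms] by simp
qed

lemma wcond_val_permute_list:
  assumes "g permutes {..<n}" and "i < n"
  shows "wcond_val (\<lambda>\<theta>. w (permute_list g \<theta>)) v s (g i) = wcond_val w v s i"
proof -
  have "wcond_val (\<lambda>\<theta>. w (permute_list g \<theta>)) v s (g i)
          = expect (\<lambda>\<theta>. w (permute_list g \<theta>) s * v (permute_list g \<theta> ! i))"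
    unfolding wcond_val_def using length_support assms by (intro expect_cong) (auto simp: permute_list_nth)
  also have "\<dots> = wcond_val w v s i"
    unfolding wcond_val_def by (rule expect_permute_list[OF assms(1)])
  finally show ?thesis .
qed

lemma expect_nth_eq:
  assumes "i < n" and "j < n"
  shows "expect (\<lambda>\<theta>. v (\<theta> ! i)) = expect (\<lambda>\<theta>. v (\<theta> ! j))"
proof -
  let ?g = "Transposition.transpose i j"
  have g: "?g permutes {..<n}" using assms by (simp add: permutes_swap_id)
  have "expect (\<lambda>\<theta>. v (\<theta> ! j)) = expect (\<lambda>\<theta>. v (permute_list ?g \<theta> ! j))"
    by (rule expect_permute_list[OF g, symmetric])
  also have "\<dots> = expect (\<lambda>\<theta>. v (\<theta> ! i))"
    using length_support assms g by (intro expect_cong) (auto simp: permute_list_nth)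
  finally show ?thesis by simp
qed

subsection \<open>Every scheme is matched by obedient weights\<close>

lemma wcond_val_merge:
  "wcond_val (\<lambda>\<theta> t. \<Sum>s<k. of_bool (h s = t) * u \<theta> s) v t i = (\<Sum>s<k. of_bool (h s = t) * wcond_val u v s i)"
  unfolding wcond_val_def by (simp add: sum_distrib_right mult.assoc expect_sum expect_cmult)

lemma sum_of_bool_eq:
  assumes "x < k"
  shows "(\<Sum>t<k. of_bool (x = t) * f t) = (f x :: real)"
proof -
  have "(\<Sum>t<k. of_bool (x = t) * f t) = (\<Sum>t<k. if x = t then f t else 0)"
    by (intro sum.cong) auto
  then show ?thesis using assms by simp
qed

text \<open>
  Relabel the states by \<open>p\<close> and merge each signal \<open>s\<close> into \<open>p (a s) < k\<close>: the merged
  signal \<open>t\<close> then recommends action \<open>t\<close>, and beats every \<open>j < k\<close> because \<open>a s\<close> beat \<open>inv p j\<close>.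
\<close>
lemma obedient_relabelled:
  assumes scheme: "is_scheme k q phi" and p: "p permutes {..<n}"
    and a: "\<And>s. s < k \<Longrightarrow> a s < n \<and> p (a s) < k"
    and a_best: "\<And>s j. s < k \<Longrightarrow> j < k \<Longrightarrow> cond_val \<rho> q phi s (inv p j) \<le> cond_val \<rho> q phi s (a s)"
  shows "\<exists>w. obedient k w \<and> wutil w = (\<Sum>s<k. cond_val \<xi> q phi s (a s))"
proof -
  define u where "u \<theta> s = pmf (phi (permute_list p \<theta>)) s" for \<theta> s
  define w where "w \<theta> t = (\<Sum>s<k. of_bool (p (a s) = t) * u \<theta> s)" for \<theta> t
  have u_val: "wcond_val u v s (p i) = cond_val v q phi s i" if "i < n" for v s i
    unfolding u_def cond_val_eq_wcond_val using wcond_val_permute_list[OF p that, of "\<lambda>\<theta> s. pmf (phi \<theta>) s"] by simp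
  have w_val: "wcond_val w v t i = (\<Sum>s<k. of_bool (p (a s) = t) * wcond_val u v s i)" for v t i
    unfolding w_def by (rule wcond_val_merge)
  have "stochastic w"
    unfolding stochastic_def
  proof (intro ballI conjI allI impI)
    fix \<theta> t assume "\<theta> \<in> S" "t < k"
    show "0 \<le> w \<theta> t" unfolding w_def u_def by (intro sum_nonneg) auto
  next
    fix \<theta> assume "\<theta> \<in> S"
    then have "set_pmf (phi (permute_list p \<theta>)) \<subseteq> {..<k}"
      using scheme permute_list_support(1)[OF p] unfolding is_scheme_def by blast
    then have "(\<Sum>s<k. u \<theta> s) = 1" unfolding u_def by (intro sum_pmf_eq_1) auto
    moreover have "(\<Sum>t<k. w \<theta> t) = (\<Sum>s<k. \<Sum>t<k. of_bool (p (a s) = t) * u \<theta> s)"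
      unfolding w_def by (rule sum.swap)
    moreover have "(\<Sum>s<k. \<Sum>t<k. of_bool (p (a s) = t) * u \<theta> s) = (\<Sum>s<k. u \<theta> s)"
      using a sum_of_bool_eq by (intro sum.cong refl) simp
    ultimately show "(\<Sum>t<k. w \<theta> t) = 1" by simp
  qed
  moreover have "wcond_val w \<rho> t j \<le> wcond_val w \<rho> t t" if "t < k" "j < k" for t j
  proof -
    have "wcond_val u \<rho> s j \<le> wcond_val u \<rho> s (p (a s))" if "s < k" for s
    proof -
      have "wcond_val u \<rho> s j = cond_val \<rho> q phi s (inv p j)"
        using u_val[of "inv p j"] permutes_inverses(1)[OF p] permutes_in_image[OF permutes_inv[OF p]]
          \<open>j < k\<close> k_le_n by simp
      also have "\<dots> \<le> cond_val \<rho> q phi s (a s)" using a_best that \<open>j < k\<close> by blast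
      also have "\<dots> = wcond_val u \<rho> s (p (a s))" using u_val a that by simp
      finally show ?thesis .
    qed
    then show ?thesis unfolding w_val by (intro sum_mono) (auto simp: of_bool_def)
  qed
  moreover have "wutil w = (\<Sum>s<k. cond_val \<xi> q phi s (a s))"
  proof -
    have "wutil w = (\<Sum>s<k. \<Sum>t<k. of_bool (p (a s) = t) * wcond_val u \<xi> s t)"
      unfolding wutil_def w_val by (rule sum.swap)
    also have "\<dots> = (\<Sum>s<k. wcond_val u \<xi> s (p (a s)))"
      using a sum_of_bool_eq by (intro sum.cong refl) simp
    also have "\<dots> = (\<Sum>s<k. cond_val \<xi> q phi s (a s))"
      using a by (intro sum.cong refl u_val) auto
    finally show ?thesis .
  qed
  ultimately show ?thesis unfolding obedient_def by blast
qed

lemma obedient_weights_of_scheme: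
  assumes scheme: "is_scheme k q phi" and m: "m = k \<or> m = n"
  shows "\<exists>w. obedient k w \<and> sender_util m k q \<rho> \<xi> phi = wutil w"
proof -
  have "k \<le> m" "m \<le> n" using m k_le_n by auto
  have "\<forall>s. \<exists>a \<in> best_resp m \<rho> q phi s.
          cond_val \<xi> q phi s a = Max (cond_val \<xi> q phi s ` best_resp m \<rho> q phi s)"
    using best_resp_attains_Max k_pos \<open>k \<le> m\<close> by (metis order.strict_trans2)
  then obtain a where a: "\<And>s. a s \<in> best_resp m \<rho> q phi s"
    and a_Max: "\<And>s. cond_val \<xi> q phi s (a s) = Max (cond_val \<xi> q phi s ` best_resp m \<rho> q phi s)"
    by metis
  have a_lt: "a s < m" for s using a[of s] unfolding best_resp_def by auto
  obtain p where p: "p permutes {..<n}" and p_a: "\<And>s. s < k \<Longrightarrow> p (a s) < k"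
    and p_inv: "\<And>j. j < k \<Longrightarrow> inv p j < m"
  proof (cases "m = k")
    case True
    then show ?thesis using that[of id] a_lt by (simp add: permutes_id inv_id)
  next
    case False
    then have "m = n" using m by simp
    have "a ` {..<k} \<subseteq> {..<n}" using a_lt \<open>m = n\<close> by auto
    moreover have "card (a ` {..<k}) \<le> k" using card_image_le[of "{..<k}" a] by simp
    ultimately obtain p where "p permutes {..<n}" "p ` a ` {..<k} \<subseteq> {..<k}"
      using permutes_exists_image_subset_lessThan k_le_n by blast
    moreover have "inv p j < m" if "j < k" for j
      using permutes_in_image[OF permutes_inv[OF \<open>p permutes {..<n}\<close>]] that k_le_n \<open>m = n\<close> by simp
    ultimately show ?thesis using that by blast
  qed
  have "cond_val \<rho> q phi s (inv p j) \<le> cond_val \<rho> q phi s (a s)" if "s < k" "j < k" for s j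
    using a[of s] p_inv[OF that(2)] unfolding best_resp_def by blast
  moreover have "a s < n \<and> p (a s) < k" if "s < k" for s
    using a_lt[of s] p_a[OF that] \<open>m \<le> n\<close> by simp
  ultimately obtain w where "obedient k w" "wutil w = (\<Sum>s<k. cond_val \<xi> q phi s (a s))"
    using obedient_relabelled[OF scheme p] by blast
  moreover have "(\<Sum>s<k. cond_val \<xi> q phi s (a s)) = sender_util m k q \<rho> \<xi> phi"
    unfolding sender_util_def using a_Max by simp
  ultimately show ?thesis by auto
qed

subsection \<open>An optimal obedient weighting exists\<close>

lemma continuous_on_wcond_val: "continuous_on UNIV (\<lambda>w. wcond_val w v s i)"
  unfolding wcond_val_def expect_def by (intro continuous_intros continuous_on_apply2)

lemma closed_obedient: "closed {w. obedient k w}"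
proof -
  have "{w. obedient k w} = (\<Inter>\<theta>\<in>S. \<Inter>s\<in>{..<k}. {w. 0 \<le> w \<theta> s}) \<inter> (\<Inter>\<theta>\<in>S. {w. (\<Sum>s<k. w \<theta> s) = 1})
     \<inter> (\<Inter>s\<in>{..<k}. \<Inter>j\<in>{..<k}. {w. wcond_val w \<rho> s j \<le> wcond_val w \<rho> s s})"
    unfolding obedient_def stochastic_def by auto
  also have "closed \<dots>"
    by (intro closed_Int closed_INT ballI closed_Collect_le closed_Collect_eq continuous_intros
        continuous_on_apply2 continuous_on_wcond_val)
  finally show ?thesis .
qed

lemma obedient_constant_signal: "obedient k (\<lambda>\<theta> s. if s = 0 then 1 else 0)"
  unfolding obedient_def stochastic_def
proof (intro conjI ballI allI impI)
  fix s j assume "s < k" "j < k"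
  show "wcond_val (\<lambda>\<theta> s. if s = 0 then 1 else 0) \<rho> s j \<le> wcond_val (\<lambda>\<theta> s. if s = 0 then 1 else 0) \<rho> s s"
  proof (cases "s = 0")
    case True
    then show ?thesis
      unfolding wcond_val_def using expect_nth_eq[of j 0 \<rho>] \<open>j < k\<close> k_le_n by simp
  qed (simp add: wcond_val_def expect_def)
qed (use k_pos in simp_all)

lemma obedient_maximiser_exists: "\<exists>w0. obedient k w0 \<and> (\<forall>w. obedient k w \<longrightarrow> wutil w \<le> wutil w0)"
proof -
  \<comment> \<open>Obedience does not constrain weights off \<open>S \<times> [k]\<close>; zeroing them there lands in a compact box.\<close>
  define restrict where
    "restrict (w :: 'a list \<Rightarrow> nat \<Rightarrow> real) \<theta> s = (if \<theta> \<in> S \<and> s < k then w \<theta> s else 0)" for w \<theta> s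
  define I where "I \<theta> s = (if \<theta> \<in> S \<and> s < k then {0..1} else {0::real})" for \<theta> s
  define K where "K = PiE UNIV (\<lambda>\<theta>. PiE UNIV (I \<theta>))"
  have compact_K: "compact K" unfolding K_def I_def by (intro compact_PiE_UNIV) auto
  have K_iff: "w \<in> K \<longleftrightarrow> (\<forall>\<theta> s. w \<theta> s \<in> I \<theta> s)" for w
    unfolding K_def by auto
  have compact_F: "compact (K \<inter> {w. obedient k w})"
    using compact_K closed_obedient by (rule compact_Int_closed)
  have val_restrict: "wcond_val (restrict w) v s i = wcond_val w v s i" if "s < k" for w v s i
    unfolding wcond_val_def using that by (intro expect_cong) (simp add: restrict_def)
  have restrict_in_F: "restrict w \<in> K \<inter> {w. obedient k w}" if "obedient k w" for w
  proof -
    have "w \<theta> s \<in> {0..1}" if "\<theta> \<in> S" "s < k" for \<theta> s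
      using \<open>obedient k w\<close> that member_le_sum[of s "{..<k}" "w \<theta>"]
      unfolding obedient_def stochastic_def by auto
    then have "restrict w \<in> K" unfolding K_iff restrict_def I_def by simp
    moreover have "obedient k (restrict w)"
      using \<open>obedient k w\<close> unfolding obedient_def stochastic_def by (simp add: val_restrict restrict_def)
    ultimately show ?thesis by simp
  qed
  have util_restrict: "wutil (restrict w) = wutil w" for w
    unfolding wutil_def by (intro sum.cong refl val_restrict) auto
  have continuous_wutil: "continuous_on UNIV wutil"
    unfolding wutil_def by (intro continuous_intros continuous_on_wcond_val)
  obtain w0 where w0: "w0 \<in> K \<inter> {w. obedient k w}"
    and max: "\<And>w. w \<in> K \<inter> {w. obedient k w} \<Longrightarrow> wutil w \<le> wutil w0"
    using continuous_attains_sup[OF compact_F _ continuous_on_subset[OF continuous_wutil]]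
      restrict_in_F[OF obedient_constant_signal] by blast
  show ?thesis
    using w0 max[OF restrict_in_F] util_restrict by (intro exI[of _ w0]) auto
qed

subsection \<open>Averaging over the fibres of the truncation\<close>

definition fibre :: "'a list \<Rightarrow> 'a list set" where
  "fibre t = {\<theta> \<in> S. take k \<theta> = t}"

definition fibre_average :: "('a list \<Rightarrow> nat \<Rightarrow> real) \<Rightarrow> 'a list \<Rightarrow> nat \<Rightarrow> real" where
  "fibre_average w \<theta> s =
     (\<Sum>\<theta>'\<in>fibre (take k \<theta>). pmf q \<theta>' * w \<theta>' s) / (\<Sum>\<theta>'\<in>fibre (take k \<theta>). pmf q \<theta>')"

lemma fibre_average_take: "take k \<theta> = take k \<theta>' \<Longrightarrow> fibre_average w \<theta> = fibre_average w \<theta>'"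
  by (simp add: fibre_average_def fun_eq_iff)

lemma fibre_mass_pos:
  assumes "\<theta> \<in> S"
  shows "0 < (\<Sum>\<theta>'\<in>fibre (take k \<theta>). pmf q \<theta>')"
proof -
  have "pmf q \<theta> \<le> (\<Sum>\<theta>'\<in>fibre (take k \<theta>). pmf q \<theta>')"
    using assms finite_support by (intro member_le_sum) (auto simp: fibre_def)
  moreover have "0 < pmf q \<theta>" using assms by (simp add: pmf_positive)
  ultimately show ?thesis by simp
qed

lemma expect_fibre_average:
  "expect (\<lambda>\<theta>. fibre_average w \<theta> s * g (take k \<theta>)) = expect (\<lambda>\<theta>. w \<theta> s * g (take k \<theta>))"
proof -
  have fibres: "expect f = (\<Sum>t\<in>take k ` S. \<Sum>\<theta>\<in>fibre t. pmf q \<theta> * f \<theta>)" for f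
    unfolding expect_def fibre_def using finite_support by (rule sum.image_gen)
  have "(\<Sum>\<theta>\<in>fibre t. pmf q \<theta> * (fibre_average w \<theta> s * g (take k \<theta>)))
          = (\<Sum>\<theta>\<in>fibre t. pmf q \<theta> * (w \<theta> s * g (take k \<theta>)))"
    if t: "t \<in> take k ` S" for t
  proof -
    obtain \<theta>0 where "\<theta>0 \<in> S" "t = take k \<theta>0" using t by auto
    then have mass_pos: "0 < (\<Sum>\<theta>\<in>fibre t. pmf q \<theta>)" using fibre_mass_pos by simp
    have "(\<Sum>\<theta>\<in>fibre t. pmf q \<theta> * (fibre_average w \<theta> s * g (take k \<theta>)))
            = (\<Sum>\<theta>\<in>fibre t. pmf q \<theta> * (fibre_average w \<theta>0 s * g t))"
    proof (rule sum.cong[OF refl])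
      fix \<theta> assume "\<theta> \<in> fibre t"
      then have "take k \<theta> = t" by (simp add: fibre_def)
      moreover have "fibre_average w \<theta> = fibre_average w \<theta>0"
        using \<open>take k \<theta> = t\<close> \<open>t = take k \<theta>0\<close> by (intro fibre_average_take) simp
      ultimately show "pmf q \<theta> * (fibre_average w \<theta> s * g (take k \<theta>))
                         = pmf q \<theta> * (fibre_average w \<theta>0 s * g t)" by simp
    qed
    also have "\<dots> = (\<Sum>\<theta>\<in>fibre t. pmf q \<theta>) * fibre_average w \<theta>0 s * g t"
      by (simp only: sum_distrib_right[symmetric] mult.assoc)
    also have "\<dots> = (\<Sum>\<theta>\<in>fibre t. pmf q \<theta> * w \<theta> s) * g t"
      using mass_pos \<open>t = take k \<theta>0\<close> by (simp add: fibre_average_def)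
    also have "\<dots> = (\<Sum>\<theta>\<in>fibre t. pmf q \<theta> * (w \<theta> s * g t))"
      by (simp only: sum_distrib_right mult.assoc)
    also have "\<dots> = (\<Sum>\<theta>\<in>fibre t. pmf q \<theta> * (w \<theta> s * g (take k \<theta>)))"
      by (intro sum.cong refl) (simp add: fibre_def)
    finally show ?thesis .
  qed
  then show ?thesis unfolding fibres by (rule sum.cong[OF refl])
qed

lemma wcond_val_fibre_average: "i < k \<Longrightarrow> wcond_val (fibre_average w) v s i = wcond_val w v s i"
  unfolding wcond_val_def using expect_fibre_average[of w s "\<lambda>t. v (t ! i)"] by simp

lemma obedient_fibre_average:
  assumes "obedient k w"
  shows "obedient k (fibre_average w)"
proof -
  have "0 \<le> fibre_average w \<theta> s" if "\<theta> \<in> S" "s < k" for \<theta> s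
    using assms that unfolding fibre_average_def obedient_def stochastic_def
    by (intro divide_nonneg_nonneg sum_nonneg) (auto simp: fibre_def)
  moreover have "(\<Sum>s<k. fibre_average w \<theta> s) = 1" if "\<theta> \<in> S" for \<theta>
  proof -
    have "(\<Sum>s<k. \<Sum>\<theta>'\<in>fibre (take k \<theta>). pmf q \<theta>' * w \<theta>' s)
            = (\<Sum>\<theta>'\<in>fibre (take k \<theta>). pmf q \<theta>' * (\<Sum>s<k. w \<theta>' s))"
      by (simp add: sum.swap[of _ "{..<k}"] sum_distrib_left)
    also have "\<dots> = (\<Sum>\<theta>'\<in>fibre (take k \<theta>). pmf q \<theta>')"
      using assms by (intro sum.cong refl) (auto simp: obedient_def stochastic_def fibre_def)
    finally show ?thesis
      using fibre_mass_pos[OF that] by (simp add: fibre_average_def sum_divide_distrib[symmetric])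
  qed
  ultimately show ?thesis
    using assms unfolding obedient_def stochastic_def by (simp add: wcond_val_fibre_average)
qed

lemma wutil_fibre_average: "wutil (fibre_average w) = wutil w"
  unfolding wutil_def by (intro sum.cong refl wcond_val_fibre_average) auto

subsection \<open>Averaging over cyclic shifts of the first \<open>k\<close> actions\<close>

definition rotation :: "nat \<Rightarrow> nat \<Rightarrow> nat" where
  "rotation c i = (if i < k then (i + c) mod k else i)"

definition cyclic_average :: "('a list \<Rightarrow> nat \<Rightarrow> real) \<Rightarrow> 'a list \<Rightarrow> nat \<Rightarrow> real" where
  "cyclic_average w \<theta> s = (\<Sum>c<k. w (permute_list (inv (rotation c)) \<theta>) (rotation c s)) / real k"

lemma rotation_lt: "i < k \<Longrightarrow> rotation c i < k"
  using k_pos by (simp add: rotation_def)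

lemma rotation_permutes_lessThan: "rotation c permutes {..<k}"
proof (rule bij_imp_permutes)
  show "bij_betw (rotation c) {..<k} {..<k}"
    using bij_betw_add_mod_lessThan[OF k_pos, of c]
    by (rule bij_betw_cong[THEN iffD1, rotated]) (simp add: rotation_def)
qed (simp add: rotation_def)

lemma rotation_permutes: "rotation c permutes {..<n}"
  using rotation_permutes_lessThan by (rule permutes_subset) (use k_le_n in auto)

lemma sum_rotation: "(\<Sum>s<k. f (rotation c s)) = (\<Sum>s<k. f s)"
  using permutes_inj_on[OF rotation_permutes_lessThan]
    sum.reindex[of "rotation c" "{..<k}" f] permutes_image[OF rotation_permutes_lessThan] by simp

lemma sum_rotation_shifts:
  assumes "t < k"
  shows "(\<Sum>c<k. f (rotation c t)) = (\<Sum>r<k. f r)"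
proof -
  have "(\<Sum>c<k. f (rotation c t)) = (\<Sum>c<k. f ((c + t) mod k))"
    using assms by (intro sum.cong) (auto simp: rotation_def add.commute)
  also have "\<dots> = (\<Sum>r<k. f r)" using bij_betw_add_mod_lessThan[OF k_pos] by (rule sum.reindex_bij_betw)
  finally show ?thesis .
qed

lemma wcond_val_permute_signals:
  assumes "r permutes {..<n}" and "i < n"
  shows "wcond_val (\<lambda>\<theta> s. u (permute_list (inv r) \<theta>) (r s)) v s i = wcond_val u v (r s) (r i)"
proof -
  have "r i < n" using permutes_in_image[OF assms(1)] assms(2) by simp
  from wcond_val_permute_list[OF permutes_inv[OF assms(1)] this, of "\<lambda>\<theta> s. u \<theta> (r s)"]
  show ?thesis using permutes_inverses(2)[OF assms(1)] by (simp add: wcond_val_def)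
qed

lemma wcond_val_cyclic_average:
  assumes "i < n"
  shows "wcond_val (cyclic_average w) v s i = (\<Sum>c<k. wcond_val w v (rotation c s) (rotation c i)) / real k"
proof -
  have "wcond_val (cyclic_average w) v s i
          = expect (\<lambda>\<theta>. (\<Sum>c<k. w (permute_list (inv (rotation c)) \<theta>) (rotation c s) * v (\<theta> ! i)) / real k)"
    unfolding wcond_val_def cyclic_average_def by (simp add: sum_distrib_right)
  also have "\<dots> = (\<Sum>c<k. wcond_val (\<lambda>\<theta> s. w (permute_list (inv (rotation c)) \<theta>) (rotation c s)) v s i) / real k"
    unfolding wcond_val_def by (simp only: expect_divide expect_sum)
  finally show ?thesis using wcond_val_permute_signals[OF rotation_permutes assms] by simp
qed

lemma stochastic_cyclic_average:
  assumes "stochastic w"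
  shows "stochastic (cyclic_average w)"
  unfolding stochastic_def
proof (intro ballI conjI allI impI)
  fix \<theta> assume "\<theta> \<in> S"
  then have w_perm: "(\<forall>s<k. 0 \<le> w (permute_list (inv (rotation c)) \<theta>) s) \<and>
                      (\<Sum>s<k. w (permute_list (inv (rotation c)) \<theta>) s) = 1" for c
    using assms permute_list_support(1)[OF permutes_inv[OF rotation_permutes]]
    unfolding stochastic_def by blast
  show "0 \<le> cyclic_average w \<theta> s" if "s < k" for s
    unfolding cyclic_average_def using w_perm rotation_lt[OF that]
    by (intro divide_nonneg_nonneg sum_nonneg) auto
  have "(\<Sum>s<k. cyclic_average w \<theta> s)
          = (\<Sum>c<k. \<Sum>s<k. w (permute_list (inv (rotation c)) \<theta>) (rotation c s)) / real k"
    unfolding cyclic_average_def sum_divide_distrib[symmetric] by (subst sum.swap) (rule refl)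
  also have "\<dots> = 1"
    using w_perm sum_rotation[of "w (permute_list (inv (rotation _)) \<theta>)"] k_pos by simp
  finally show "(\<Sum>s<k. cyclic_average w \<theta> s) = 1" .
qed

lemma wcond_val_cyclic_average_outside:
  assumes "stochastic w" and "t < k" and "k \<le> j" and "j < n"
  shows "wcond_val (cyclic_average w) v t j = expect (\<lambda>\<theta>. v (\<theta> ! j)) / real k"
proof -
  have "wcond_val (cyclic_average w) v t j = (\<Sum>c<k. wcond_val w v (rotation c t) j) / real k"
    using assms by (simp add: wcond_val_cyclic_average rotation_def)
  also have "\<dots> = (\<Sum>r<k. wcond_val w v r j) / real k"
    using sum_rotation_shifts[OF assms(2), of "\<lambda>r. wcond_val w v r j"] by simp
  finally show ?thesis using sum_wcond_val_signals[OF assms(1)] by simp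
qed

lemma sum_wcond_val_cyclic_average:
  assumes "stochastic w" and "t < k" and "j < n"
  shows "(\<Sum>i<k. wcond_val (cyclic_average w) v t i) = expect (\<lambda>\<theta>. v (\<theta> ! j))"
proof -
  have "(\<Sum>i<k. wcond_val (cyclic_average w) v t i)
          = (\<Sum>i<k. (\<Sum>c<k. wcond_val w v (rotation c t) (rotation c i)) / real k)"
    using k_le_n by (intro sum.cong refl) (simp add: wcond_val_cyclic_average)
  also have "\<dots> = (\<Sum>i<k. \<Sum>c<k. wcond_val w v (rotation c t) (rotation c i)) / real k"
    by (rule sum_divide_distrib[symmetric])
  also have "\<dots> = (\<Sum>c<k. \<Sum>i<k. wcond_val w v (rotation c t) i) / real k"
    by (subst sum.swap) (rule arg_cong[where f = "\<lambda>x. x / real k"], rule sum.cong[OF refl], rule sum_rotation)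
  also have "\<dots> = (\<Sum>i<k. \<Sum>r<k. wcond_val w v r i) / real k"
    by (subst sum.swap)
      (rule arg_cong[where f = "\<lambda>x. x / real k"], rule sum.cong[OF refl], rule sum_rotation_shifts[OF assms(2)])
  also have "\<dots> = (\<Sum>i<k. expect (\<lambda>\<theta>. v (\<theta> ! j))) / real k"
  proof (intro arg_cong[where f = "\<lambda>x. x / real k"] sum.cong refl)
    fix i assume "i \<in> {..<k}"
    then show "(\<Sum>r<k. wcond_val w v r i) = expect (\<lambda>\<theta>. v (\<theta> ! j))"
      using sum_wcond_val_signals[OF assms(1)] expect_nth_eq[of i j v] k_le_n assms(3) by simp
  qed
  finally show ?thesis using k_pos by simp
qed

text \<open>
  For \<open>j \<ge> k\<close> the averaged weights give action \<open>j\<close> the value \<open>E \<rho>(\<theta>\<^sub>j) / k\<close> at every signal,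
  while by symmetry the values of the \<open>k\<close> recommendable actions add up to \<open>E \<rho>(\<theta>\<^sub>j)\<close>;
  so the recommended one, being the largest of them, is at least the average.
\<close>
lemma obedient_cyclic_average:
  assumes "obedient k w"
  shows "obedient n (cyclic_average w)"
proof -
  have st: "stochastic w" using assms by (simp add: obedient_def)
  have inside: "wcond_val (cyclic_average w) \<rho> t j \<le> wcond_val (cyclic_average w) \<rho> t t"
    if "t < k" "j < k" for t j
  proof -
    have "(\<Sum>c<k. wcond_val w \<rho> (rotation c t) (rotation c j)) \<le> (\<Sum>c<k. wcond_val w \<rho> (rotation c t) (rotation c t))"
      using assms rotation_lt that by (intro sum_mono) (simp add: obedient_def)
    then show ?thesis using that k_le_n by (simp add: wcond_val_cyclic_average divide_right_mono)
  qed
  have "wcond_val (cyclic_average w) \<rho> t j \<le> wcond_val (cyclic_average w) \<rho> t t"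
    if "t < k" "k \<le> j" "j < n" for t j
  proof -
    have "expect (\<lambda>\<theta>. \<rho> (\<theta> ! j)) = (\<Sum>i<k. wcond_val (cyclic_average w) \<rho> t i)"
      using sum_wcond_val_cyclic_average[OF st that(1,3)] by simp
    also have "\<dots> \<le> of_nat (card {..<k}) * wcond_val (cyclic_average w) \<rho> t t"
      using inside[OF that(1)] by (intro sum_bounded_above) auto
    finally show ?thesis
      using wcond_val_cyclic_average_outside[OF st that] k_pos by (simp add: divide_le_eq mult.commute)
  qed
  then show ?thesis
    using inside stochastic_cyclic_average[OF st] unfolding obedient_def by (meson not_le)
qed

lemma wutil_cyclic_average: "wutil (cyclic_average w) = wutil w"
proof -
  have "wutil (cyclic_average w) = (\<Sum>t<k. (\<Sum>c<k. wcond_val w \<xi> (rotation c t) (rotation c t)) / real k)"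
    unfolding wutil_def using k_le_n by (intro sum.cong refl) (simp add: wcond_val_cyclic_average)
  also have "\<dots> = (\<Sum>t<k. \<Sum>c<k. wcond_val w \<xi> (rotation c t) (rotation c t)) / real k"
    by (rule sum_divide_distrib[symmetric])
  also have "\<dots> = (\<Sum>c<k. wutil w) / real k"
    unfolding wutil_def
    by (subst sum.swap) (rule arg_cong[where f = "\<lambda>x. x / real k"], rule sum.cong[OF refl], rule sum_rotation)
  finally show ?thesis using k_pos by simp
qed

lemma cyclic_average_take:
  assumes "\<And>\<theta> \<theta>'. take k \<theta> = take k \<theta>' \<Longrightarrow> w \<theta> = w \<theta>'"
    and "\<theta> \<in> S" and "\<theta>' \<in> S" and "take k \<theta> = take k \<theta>'"
  shows "cyclic_average w \<theta> = cyclic_average w \<theta>'"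
proof -
  have len: "k \<le> length \<theta>" "k \<le> length \<theta>'" using assms(2,3) length_support k_le_n by auto
  have "w (permute_list (inv (rotation c)) \<theta>) = w (permute_list (inv (rotation c)) \<theta>')" for c
  proof (rule assms(1))
    have g: "inv (rotation c) permutes {..<k}" by (rule permutes_inv[OF rotation_permutes_lessThan])
    have "take k (permute_list (inv (rotation c)) \<theta>) = permute_list (inv (rotation c)) (take k \<theta>')"
      using take_permute_list[OF g len(1)] assms(4) by simp
    also have "\<dots> = take k (permute_list (inv (rotation c)) \<theta>')"
      using take_permute_list[OF g len(2)] by simp
    finally show "take k (permute_list (inv (rotation c)) \<theta>) = take k (permute_list (inv (rotation c)) \<theta>')" .
  qed
  then show ?thesis unfolding cyclic_average_def by simp
qed

subsection \<open>An optimal direct scheme that only looks at the first \<open>k\<close> coordinates\<close>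

lemma optimal_obedient_weights:
  "\<exists>w. obedient n w \<and> (\<forall>\<theta>\<in>S. \<forall>\<theta>'\<in>S. take k \<theta> = take k \<theta>' \<longrightarrow> w \<theta> = w \<theta>') \<and>
     (\<forall>phi. is_scheme k q phi \<longrightarrow> sender_util n k q \<rho> \<xi> phi \<le> wutil w \<and> sender_util k k q \<rho> \<xi> phi \<le> wutil w)"
proof -
  obtain w0 where w0: "obedient k w0" and max: "\<And>w. obedient k w \<Longrightarrow> wutil w \<le> wutil w0"
    using obedient_maximiser_exists by blast
  define w where "w = cyclic_average (fibre_average w0)"
  have "obedient n w"
    unfolding w_def using w0 by (intro obedient_cyclic_average obedient_fibre_average)
  moreover have "w \<theta> = w \<theta>'" if "\<theta> \<in> S" "\<theta>' \<in> S" "take k \<theta> = take k \<theta>'" for \<theta> \<theta>'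
    unfolding w_def using fibre_average_take by (rule cyclic_average_take) (use that in blast)+
  moreover have "sender_util m k q \<rho> \<xi> phi \<le> wutil w"
    if scheme: "is_scheme k q phi" and m: "m = k \<or> m = n" for phi m
  proof -
    obtain w' where "obedient k w'" "sender_util m k q \<rho> \<xi> phi = wutil w'"
      using obedient_weights_of_scheme[OF scheme m] by blast
    then show ?thesis using max by (simp add: w_def wutil_cyclic_average wutil_fibre_average)
  qed
  ultimately show ?thesis by blast
qed

lemma direct_scheme_of_weights:
  assumes "obedient m w"
    and "\<forall>\<theta>\<in>S. \<forall>\<theta>'\<in>S. take k \<theta> = take k \<theta>' \<longrightarrow> w \<theta> = w \<theta>'"
  shows "\<exists>\<psi>. is_scheme k q (\<lambda>\<theta>. \<psi> (take k \<theta>)) \<and>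
              (\<forall>s<k. \<forall>j<m. cond_val \<rho> q (\<lambda>\<theta>. \<psi> (take k \<theta>)) s j \<le> cond_val \<rho> q (\<lambda>\<theta>. \<psi> (take k \<theta>)) s s) \<and>
              direct_util k q \<xi> (\<lambda>\<theta>. \<psi> (take k \<theta>)) = wutil w"
proof -
  define rep where "rep t = (SOME \<theta>. \<theta> \<in> S \<and> take k \<theta> = t)" for t
  have rep: "rep (take k \<theta>) \<in> S" "take k (rep (take k \<theta>)) = take k \<theta>" if "\<theta> \<in> S" for \<theta>
    using someI_ex[of "\<lambda>\<theta>'. \<theta>' \<in> S \<and> take k \<theta>' = take k \<theta>"] that unfolding rep_def by auto
  have "\<forall>t\<in>take k ` S. \<exists>p. \<forall>s. pmf p s = (if s < k then w (rep t) s else 0)"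
  proof
    fix t assume "t \<in> take k ` S"
    then have "rep t \<in> S" using rep by blast
    then show "\<exists>p. \<forall>s. pmf p s = (if s < k then w (rep t) s else 0)"
      using assms(1) unfolding obedient_def stochastic_def by (intro pmf_exists_of_weights) auto
  qed
  from bchoice[OF this] obtain \<psi>
    where \<psi>: "\<forall>t\<in>take k ` S. \<forall>s. pmf (\<psi> t) s = (if s < k then w (rep t) s else 0)"
    by blast
  have pmf_\<psi>: "pmf (\<psi> (take k \<theta>)) s = (if s < k then w \<theta> s else 0)" if "\<theta> \<in> S" for \<theta> s
  proof -
    have "w (rep (take k \<theta>)) = w \<theta>" using assms(2) rep[OF that] that by blast
    then show ?thesis using \<psi> that by simp
  qed
  have val: "cond_val v q (\<lambda>\<theta>. \<psi> (take k \<theta>)) s i = wcond_val w v s i" if "s < k" for v s i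
    unfolding cond_val_eq_wcond_val wcond_val_def using that by (intro expect_cong) (simp add: pmf_\<psi>)
  have "is_scheme k q (\<lambda>\<theta>. \<psi> (take k \<theta>))"
    unfolding is_scheme_def
  proof (intro ballI subsetI)
    fix \<theta> s assume "\<theta> \<in> S" "s \<in> set_pmf (\<psi> (take k \<theta>))"
    then show "s \<in> {..<k}" using pmf_\<psi>[of \<theta> s] by (auto simp: set_pmf_eq split: if_splits)
  qed
  moreover have "\<forall>s<k. \<forall>j<m. cond_val \<rho> q (\<lambda>\<theta>. \<psi> (take k \<theta>)) s j \<le> cond_val \<rho> q (\<lambda>\<theta>. \<psi> (take k \<theta>)) s s"
    using assms(1) unfolding obedient_def by (simp add: val)
  moreover have "direct_util k q \<xi> (\<lambda>\<theta>. \<psi> (take k \<theta>)) = wutil w"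
    unfolding direct_util_def wutil_def by (simp add: val)
  ultimately show ?thesis by blast
qed

lemma optimal_direct_scheme:
  obtains \<psi> where "persuasive_direct n k q \<rho> (\<lambda>\<theta>. \<psi> (take k \<theta>))"
    and "sender_util n k q \<rho> \<xi> (\<lambda>\<theta>. \<psi> (take k \<theta>)) = direct_util k q \<xi> (\<lambda>\<theta>. \<psi> (take k \<theta>))"
    and "sender_util k k q \<rho> \<xi> (\<lambda>\<theta>. \<psi> (take k \<theta>)) = direct_util k q \<xi> (\<lambda>\<theta>. \<psi> (take k \<theta>))"
    and "\<And>phi. is_scheme k q phi \<Longrightarrow> sender_util n k q \<rho> \<xi> phi \<le> direct_util k q \<xi> (\<lambda>\<theta>. \<psi> (take k \<theta>))"
    and "\<And>phi. is_scheme k q phi \<Longrightarrow> sender_util k k q \<rho> \<xi> phi \<le> direct_util k q \<xi> (\<lambda>\<theta>. \<psi> (take k \<theta>))"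
proof -
  obtain w where w: "obedient n w" "\<forall>\<theta>\<in>S. \<forall>\<theta>'\<in>S. take k \<theta> = take k \<theta>' \<longrightarrow> w \<theta> = w \<theta>'"
    and opt: "\<And>phi. is_scheme k q phi \<Longrightarrow> sender_util n k q \<rho> \<xi> phi \<le> wutil w \<and> sender_util k k q \<rho> \<xi> phi \<le> wutil w"
    using optimal_obedient_weights by blast
  then obtain \<psi> where scheme: "is_scheme k q (\<lambda>\<theta>. \<psi> (take k \<theta>))"
    and obey: "\<forall>s<k. \<forall>j<n. cond_val \<rho> q (\<lambda>\<theta>. \<psi> (take k \<theta>)) s j \<le> cond_val \<rho> q (\<lambda>\<theta>. \<psi> (take k \<theta>)) s s"
    and util: "direct_util k q \<xi> (\<lambda>\<theta>. \<psi> (take k \<theta>)) = wutil w"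
    using direct_scheme_of_weights by blast
  have "direct_util k q \<xi> (\<lambda>\<theta>. \<psi> (take k \<theta>)) \<le> sender_util m k q \<rho> \<xi> (\<lambda>\<theta>. \<psi> (take k \<theta>))"
    if "k \<le> m" "m \<le> n" for m
    using obey that by (intro direct_util_le_sender_util) auto
  then have "sender_util n k q \<rho> \<xi> (\<lambda>\<theta>. \<psi> (take k \<theta>)) = wutil w"
    "sender_util k k q \<rho> \<xi> (\<lambda>\<theta>. \<psi> (take k \<theta>)) = wutil w"
    using opt[OF scheme] util k_le_n by (simp_all add: order.antisym)
  moreover have "persuasive_direct n k q \<rho> (\<lambda>\<theta>. \<psi> (take k \<theta>))"
    using scheme obey unfolding persuasive_direct_def by blast
  ultimately show ?thesis using that opt util by presburger
qed

end

theorem propositionC1: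
  fixes n k :: nat and q :: "'a list pmf" and \<rho> \<xi> :: "'a \<Rightarrow> real"
  assumes "2 \<le> k" and "k \<le> n"
    and "finite (set_pmf q)"
    and "\<forall>\<theta>\<in>set_pmf q. length \<theta> = n"
    and "symmetric_instance q"
  shows "\<exists>\<psi> :: 'a list \<Rightarrow> nat pmf.
    persuasive_direct n k q \<rho> (\<lambda>\<theta>. \<psi> (take k \<theta>)) \<and>
    (\<forall>phi. is_scheme k q phi \<longrightarrow>
        sender_util n k q \<rho> \<xi> phi \<le> direct_util k q \<xi> (\<lambda>\<theta>. \<psi> (take k \<theta>))) \<and>
    persuasive_direct k k (map_pmf (take k) q) \<rho> \<psi> \<and>
    (\<forall>phi. is_scheme k (map_pmf (take k) q) phi \<longrightarrow>
        sender_util k k (map_pmf (take k) q) \<rho> \<xi> phi \<le> direct_util k (map_pmf (take k) q) \<xi> \<psi>) \<and>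
    opt_util n k q \<rho> \<xi> = opt_util k k (map_pmf (take k) q) \<rho> \<xi>"
proof -
  interpret symmetric_prior n k q \<rho> \<xi> using assms by unfold_locales simp_all
  let ?Q = "map_pmf (take k) q"
  obtain \<psi> where pers: "persuasive_direct n k q \<rho> (\<lambda>\<theta>. \<psi> (take k \<theta>))"
    and attains: "sender_util n k q \<rho> \<xi> (\<lambda>\<theta>. \<psi> (take k \<theta>)) = direct_util k q \<xi> (\<lambda>\<theta>. \<psi> (take k \<theta>))"
      "sender_util k k q \<rho> \<xi> (\<lambda>\<theta>. \<psi> (take k \<theta>)) = direct_util k q \<xi> (\<lambda>\<theta>. \<psi> (take k \<theta>))"
    and opt_n: "\<And>phi. is_scheme k q phi \<Longrightarrow> sender_util n k q \<rho> \<xi> phi \<le> direct_util k q \<xi> (\<lambda>\<theta>. \<psi> (take k \<theta>))"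
    and opt_k: "\<And>phi. is_scheme k q phi \<Longrightarrow> sender_util k k q \<rho> \<xi> phi \<le> direct_util k q \<xi> (\<lambda>\<theta>. \<psi> (take k \<theta>))"
    using optimal_direct_scheme by blast
  note truncate = is_scheme_map_pmf_iff sender_util_map_pmf_take[OF assms(3)] direct_util_map_pmf_take[OF assms(3)]
  have pers_Q: "persuasive_direct k k ?Q \<rho> \<psi>"
    using persuasive_direct_mono[OF assms(2) pers] persuasive_direct_map_pmf_take_iff[OF assms(3)] by simp
  have opt_Q: "sender_util k k ?Q \<rho> \<xi> phi \<le> direct_util k ?Q \<xi> \<psi>" if "is_scheme k ?Q phi" for phi
    using that by (simp add: truncate opt_k)
  have "opt_util n k q \<rho> \<xi> = sender_util n k q \<rho> \<xi> (\<lambda>\<theta>. \<psi> (take k \<theta>))"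
    using pers opt_n attains(1) by (intro opt_util_eqI) (simp_all add: persuasive_direct_def)
  moreover have "opt_util k k ?Q \<rho> \<xi> = sender_util k k ?Q \<rho> \<xi> \<psi>"
    using pers_Q opt_Q attains(2) truncate by (intro opt_util_eqI) (simp_all add: persuasive_direct_def)
  ultimately show ?thesis
    using pers opt_n pers_Q opt_Q attains truncate by (intro exI[of _ \<psi>]) auto
qed

end
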